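(* Let $n\ge 1$, $d\ge 2$, $1\le k\le n$ be integers and $R=n-k\lfloor n/k\rfloor$. For every $k$-separable state $\rho$ on $(\mathbb{C}^d)^{\otimes n}$, $$\|\tau(\rho)\|\le\sqrt{\big(d^{\lceil n/k\rceil}-1\big)^{R}\big(d^{\lfloor n/k\rfloor}-1\big)^{k-R}}.$$
   Context: Consider $n$ qudits with Hilbert space $(\mathbb{C}^d)^{\otimes n}$. Let $\lambda_0=\mathbb{1}_d$ and let $\lambda_1,\dots,\lambda_{d^2-1}$ be Hermitian traceless $d\times d$ matrices normalized so that $\mathrm{Tr}[\lambda_i\lambda_j]=d\,\delta_{ij}$. The full-body correlation tensor norm of a state $\rho$ is $\|\tau(\rho)\|=\big(\sum_{i_1,\dots,i_n=1}^{d^2-1}(\mathrm{Tr}[\rho\,\lambda_{i_1}\otimes\cdots\otimes\lambda_{i_n}])^2\big)^{1/2}$. A pure state is $k$-separable if it is a tensor product of $k$ pure states on the blocks of some partition of $\{1,\dots,n\}$ into $k$ nonempty blocks; a state is $k$-separable if it is a convex combination of $k$-separable pure states (partitions may differ between terms). *)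

theory Defs
  imports "HOL-Analysis.Analysis" "HOL-Library.Disjoint_Sets" "HOL-Library.FuncSet"
begin

text \<open>Computational basis of the qudits in a set S of sites: maps S \<rightarrow> {0..<d}
  (extensional, undefined outside S). Basis of (C^d)^{\<otimes> n} is cfg d {..<n}.\<close>
definition cfg :: "nat \<Rightarrow> nat set \<Rightarrow> (nat \<Rightarrow> nat) set" where
  "cfg d S = (S \<rightarrow>\<^sub>E {..<d})"

text \<open>Operators on (C^d)^{\<otimes> n} are matrices indexed by basis configurations;
  single-qudit operators are d x d matrices given as functions on indices < d.\<close>
type_synonym op1 = "nat \<Rightarrow> nat \<Rightarrow> complex"
type_synonym opn = "(nat \<Rightarrow> nat) \<Rightarrow> (nat \<Rightarrow> nat) \<Rightarrow> complex"

definition tensor_ops :: "nat \<Rightarrow> (nat \<Rightarrow> op1) \<Rightarrow> opn" where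
  "tensor_ops n A = (\<lambda>x y. \<Prod>j<n. A j (x j) (y j))"

definition trace_prod :: "nat \<Rightarrow> nat \<Rightarrow> opn \<Rightarrow> opn \<Rightarrow> complex" where
  "trace_prod d n \<rho> M = (\<Sum>x\<in>cfg d {..<n}. \<Sum>y\<in>cfg d {..<n}. \<rho> x y * M y x)"

definition gm_basis :: "nat \<Rightarrow> (nat \<Rightarrow> op1) \<Rightarrow> bool" where
  "gm_basis d lam \<longleftrightarrow>
     (\<forall>i\<in>{1..d^2-1}. (\<forall>a<d. \<forall>b<d. lam i a b = cnj (lam i b a))
                     \<and> (\<Sum>a<d. lam i a a) = 0)
   \<and> (\<forall>i\<in>{1..d^2-1}. \<forall>j\<in>{1..d^2-1}.
        (\<Sum>a<d. \<Sum>b<d. lam i a b * lam j b a) = (if i = j then of_nat d else 0))"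

definition tau_norm :: "nat \<Rightarrow> nat \<Rightarrow> (nat \<Rightarrow> op1) \<Rightarrow> opn \<Rightarrow> real" where
  "tau_norm d n lam \<rho> =
     sqrt (\<Sum>is\<in>({..<n} \<rightarrow>\<^sub>E {1..d^2-1}).
             (cmod (trace_prod d n \<rho> (tensor_ops n (\<lambda>j. lam (is j))))) ^ 2)"

definition unit_vec :: "nat \<Rightarrow> nat set \<Rightarrow> ((nat \<Rightarrow> nat) \<Rightarrow> complex) \<Rightarrow> bool" where
  "unit_vec d S \<phi> \<longleftrightarrow> (\<Sum>x\<in>cfg d S. (cmod (\<phi> x))^2) = 1"

definition ksep_pure :: "nat \<Rightarrow> nat \<Rightarrow> nat \<Rightarrow> ((nat \<Rightarrow> nat) \<Rightarrow> complex) \<Rightarrow> bool" where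
  "ksep_pure d n k \<psi> \<longleftrightarrow>
     (\<exists>P \<phi>. partition_on {..<n} P \<and> card P = k
         \<and> (\<forall>B\<in>P. unit_vec d B (\<phi> B))
         \<and> (\<forall>x\<in>cfg d {..<n}. \<psi> x = (\<Prod>B\<in>P. \<phi> B (restrict x B))))"

definition ksep_state :: "nat \<Rightarrow> nat \<Rightarrow> nat \<Rightarrow> opn \<Rightarrow> bool" where
  "ksep_state d n k \<rho> \<longleftrightarrow>
     (\<exists>m (p :: nat \<Rightarrow> real) \<psi>. (\<forall>i<m. p i \<ge> 0) \<and> (\<Sum>i<m. p i) = 1
        \<and> (\<forall>i<m. ksep_pure d n k (\<psi> i))
        \<and> (\<forall>x\<in>cfg d {..<n}. \<forall>y\<in>cfg d {..<n}.
              \<rho> x y = (\<Sum>i<m. complex_of_real (p i) * \<psi> i x * cnj (\<psi> i y))))"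

end

(*
  A pure k-separable state is a product of unit vectors phi_B over the k blocks B of a
  partition, and its full-body correlations factorise over the blocks, so that
  ||tau(psi)||^2 = prod_B ||tau(phi_B)||^2.  Adjoining lambda_0 = 1 to the lambda_i makes the
  tensor products of the lambda's an orthogonal basis of the d^|B| x d^|B| matrices, each of
  squared Hilbert-Schmidt norm d^|B|; Bessel's inequality for the rank-one operator |phi_B><phi_B|
  then gives 1 + ||tau(phi_B)||^2 <= d^|B|, the 1 being the coefficient of the identity.
  Since m |-> ln (d^m - 1) is concave, prod_B (d^|B| - 1) over block sizes summing to n is
  largest when all sizes are floor(n/k) or ceiling(n/k).  Finally |sum_i p_i t_i|^2 <=
  sum_i p_i |t_i|^2 carries the bound from pure states to their mixtures.
*)

theory Submission
  imports Defs
begin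

section \<open>Sums over functions on a partition\<close>

lemma PiE_neqE:
  assumes "x \<in> S \<rightarrow>\<^sub>E A" "y \<in> S \<rightarrow>\<^sub>E B" "x \<noteq> y"
  obtains j where "j \<in> S" "x j \<noteq> y j"
proof -
  from \<open>x \<noteq> y\<close> obtain j where j: "x j \<noteq> y j" by (auto simp: fun_eq_iff)
  then have "j \<in> S" using PiE_arb[OF assms(1)] PiE_arb[OF assms(2)] by metis
  show thesis using \<open>j \<in> S\<close> j by (rule that)
qed

lemma prod_if_eq_PiE:
  assumes S: "finite S" and e: "e \<in> S \<rightarrow>\<^sub>E A" and f: "f \<in> S \<rightarrow>\<^sub>E A"
  shows "(\<Prod>j\<in>S. if e j = f j then c else 0) = (if e = f then c ^ card S else (0 :: 'c::comm_semiring_1))"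
proof (cases "e = f")
  case False
  with e f obtain j where "j \<in> S" "e j \<noteq> f j" by (rule PiE_neqE)
  then have "(\<Prod>j\<in>S. if e j = f j then c else 0) = 0"
    using S by (intro prod_zero) auto
  then show ?thesis using False by simp
qed simp

lemma bij_betw_restrict_blocks:
  assumes "disjoint P"
  shows "bij_betw (\<lambda>x. \<lambda>C\<in>P. restrict x C) (\<Union>P \<rightarrow>\<^sub>E T) (PiE P (\<lambda>C. C \<rightarrow>\<^sub>E T))"
proof -
  define glue where
    "glue g = (\<lambda>j. if j \<in> \<Union>P then g (THE C. C \<in> P \<and> j \<in> C) j else undefined)"
    for g :: "'a set \<Rightarrow> 'a \<Rightarrow> 'b"
  have glue: "glue g j = g C j" if "C \<in> P" "j \<in> C" for g C j
  proof -
    have "(THE C. C \<in> P \<and> j \<in> C) = C"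
      using that disjointD[OF assms] by (intro the_equality) blast+
    then show ?thesis using that by (auto simp: glue_def)
  qed
  show ?thesis
  proof (rule bij_betwI[where g = glue])
    show "(\<lambda>x. \<lambda>C\<in>P. restrict x C) \<in> (\<Union>P \<rightarrow>\<^sub>E T) \<rightarrow> PiE P (\<lambda>C. C \<rightarrow>\<^sub>E T)"
      by auto
    show "glue \<in> PiE P (\<lambda>C. C \<rightarrow>\<^sub>E T) \<rightarrow> (\<Union>P \<rightarrow>\<^sub>E T)"
    proof (intro Pi_I PiE_I)
      fix g j assume g: "g \<in> PiE P (\<lambda>C. C \<rightarrow>\<^sub>E T)" and "j \<in> \<Union>P"
      then obtain C where "C \<in> P" "j \<in> C" by blast
      then show "glue g j \<in> T" using PiE_mem[OF PiE_mem[OF g]] by (simp add: glue)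
    qed (simp add: glue_def)
    fix x assume x: "x \<in> \<Union>P \<rightarrow>\<^sub>E T"
    show "glue (\<lambda>C\<in>P. restrict x C) = x"
    proof
      fix j
      show "glue (\<lambda>C\<in>P. restrict x C) j = x j"
      proof (cases "j \<in> \<Union>P")
        case True
        then obtain C where "C \<in> P" "j \<in> C" by blast
        then show ?thesis by (simp add: glue)
      qed (use PiE_arb[OF x, of j] in \<open>simp add: glue_def\<close>)
    qed
  next
    fix g assume g: "g \<in> PiE P (\<lambda>C. C \<rightarrow>\<^sub>E T)"
    show "(\<lambda>C\<in>P. restrict (glue g) C) = g"
    proof (intro ext)
      fix C j
      show "(\<lambda>C\<in>P. restrict (glue g) C) C j = g C j"
      proof (cases "C \<in> P")
        case True
        from g True have gC: "g C \<in> C \<rightarrow>\<^sub>E T" by (rule PiE_mem)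
        show ?thesis
          using True PiE_arb[OF gC, of j] by (cases "j \<in> C") (simp_all add: glue)
      qed (simp add: PiE_arb[OF g])
    qed
  qed
qed

lemma sum_PiE_Union_prod_restrict:
  fixes f :: "'i set \<Rightarrow> ('i \<Rightarrow> 'b) \<Rightarrow> 'c::comm_semiring_1"
  assumes P: "finite P" "\<And>C. C \<in> P \<Longrightarrow> finite C" "disjoint P" and T: "finite T"
  shows "(\<Sum>x\<in>\<Union>P \<rightarrow>\<^sub>E T. \<Prod>C\<in>P. f C (restrict x C)) = (\<Prod>C\<in>P. \<Sum>a\<in>C \<rightarrow>\<^sub>E T. f C a)"
proof -
  have "(\<Sum>x\<in>\<Union>P \<rightarrow>\<^sub>E T. \<Prod>C\<in>P. f C (restrict x C))
      = (\<Sum>g\<in>PiE P (\<lambda>C. C \<rightarrow>\<^sub>E T). \<Prod>C\<in>P. f C (g C))"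
    using sum.reindex_bij_betw[OF bij_betw_restrict_blocks[OF P(3)], of "\<lambda>g. \<Prod>C\<in>P. f C (g C)"]
    by simp
  also have "\<dots> = (\<Prod>C\<in>P. \<Sum>a\<in>C \<rightarrow>\<^sub>E T. f C a)"
    using P T by (intro prod_sum_PiE[symmetric]) (auto intro: finite_PiE)
  finally show ?thesis .
qed

section \<open>Inequalities\<close>

lemma bessel_inequality:
  fixes u :: "'e \<Rightarrow> 'z \<Rightarrow> complex" and v :: "'z \<Rightarrow> complex" and N :: real
  assumes X: "finite X" and E: "finite E" and N: "N \<ge> 0"
    and orth: "\<And>e f. e \<in> E \<Longrightarrow> f \<in> E \<Longrightarrow>
      (\<Sum>z\<in>X. cnj (u e z) * u f z) = (if e = f then of_real N else 0)"
  shows "(\<Sum>e\<in>E. (cmod (\<Sum>z\<in>X. cnj (u e z) * v z))^2) \<le> N * (\<Sum>z\<in>X. (cmod (v z))^2)"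
proof -
  define c where "c e = (\<Sum>z\<in>X. cnj (u e z) * v z)" for e
  define S where "S = (\<Sum>e\<in>E. (cmod (c e))^2)"
  define w where "w z = (\<Sum>e\<in>E. c e * u e z)" for z
  define V where "V = (\<Sum>z\<in>X. (cmod (v z))^2)"
  define W where "W = (\<Sum>z\<in>X. (cmod (w z))^2)"
  have S0: "S \<ge> 0" unfolding S_def by (simp add: sum_nonneg)
  have V0: "V \<ge> 0" unfolding V_def by (simp add: sum_nonneg)
  have sq: "complex_of_real ((cmod a)^2) = a * cnj a" for a :: complex
    by (simp add: complex_mult_cnj cmod_def)
  have vw: "(\<Sum>z\<in>X. v z * cnj (w z)) = of_real S"
  proof -
    have "(\<Sum>z\<in>X. v z * cnj (w z)) = (\<Sum>z\<in>X. \<Sum>e\<in>E. cnj (c e) * (cnj (u e z) * v z))"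
      unfolding w_def by (simp add: sum_distrib_left mult_ac)
    also have "\<dots> = (\<Sum>e\<in>E. cnj (c e) * c e)"
      by (subst sum.swap) (simp add: c_def sum_distrib_left)
    also have "\<dots> = of_real S"
      unfolding S_def of_real_sum sq by (simp add: mult_ac)
    finally show ?thesis .
  qed
  have "complex_of_real W = of_real N * of_real S"
  proof -
    have "of_real W = (\<Sum>z\<in>X. w z * cnj (w z))"
      unfolding W_def of_real_sum sq by simp
    also have "\<dots> = (\<Sum>z\<in>X. \<Sum>e\<in>E. \<Sum>f\<in>E. c e * cnj (c f) * (cnj (u f z) * u e z))"
      unfolding w_def by (simp add: sum_distrib_left sum_distrib_right mult_ac)
        (rule sum.cong, simp, rule sum.swap)
    also have "\<dots> = (\<Sum>e\<in>E. \<Sum>f\<in>E. c e * cnj (c f) * (\<Sum>z\<in>X. cnj (u f z) * u e z))"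
      by (simp add: sum.swap[of _ X] sum_distrib_left)
    also have "\<dots> = (\<Sum>e\<in>E. \<Sum>f\<in>E. c e * cnj (c f) * (if f = e then of_real N else 0))"
      by (intro sum.cong refl) (simp add: orth)
    also have "\<dots> = (\<Sum>e\<in>E. of_real N * (c e * cnj (c e)))"
      using E by (simp add: if_distrib mult_ac cong: if_cong)
    also have "\<dots> = of_real N * of_real S"
      unfolding S_def of_real_sum sq by (simp add: sum_distrib_left)
    finally show ?thesis .
  qed
  then have W: "W = N * S" by (metis of_real_eq_iff of_real_mult)
  have "S = cmod (\<Sum>z\<in>X. v z * cnj (w z))" using vw S0 by simp
  also have "\<dots> \<le> (\<Sum>z\<in>X. cmod (v z) * cmod (w z))"
    by (rule order_trans[OF norm_sum]) (simp add: norm_mult)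
  finally have "S \<le> (\<Sum>z\<in>X. cmod (v z) * cmod (w z))" .
  then have "S^2 \<le> (\<Sum>z\<in>X. cmod (v z) * cmod (w z))^2"
    using S0 by (simp add: power_mono)
  also have "\<dots> \<le> V * W" unfolding V_def W_def by (rule Cauchy_Schwarz_ineq_sum)
  finally have "S * S \<le> (N * V) * S" using W by (simp add: power2_eq_square mult_ac)
  then have "S \<le> N * V"
  proof (cases "S = 0")
    case False
    with S0 have "S > 0" by simp
    with \<open>S * S \<le> (N * V) * S\<close> show ?thesis by (rule mult_right_le_imp_le)
  qed (use N V0 in simp)
  then show ?thesis unfolding S_def V_def c_def .
qed

lemma cmod_convex_comb_sq_le:
  fixes p :: "nat \<Rightarrow> real" and t :: "nat \<Rightarrow> complex"
  assumes p0: "\<And>i. i < m \<Longrightarrow> 0 \<le> p i" and p1: "(\<Sum>i<m. p i) = 1"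
  shows "(cmod (\<Sum>i<m. of_real (p i) * t i))^2 \<le> (\<Sum>i<m. p i * (cmod (t i))^2)"
proof -
  have "cmod (\<Sum>i<m. of_real (p i) * t i) \<le> (\<Sum>i<m. sqrt (p i) * (sqrt (p i) * cmod (t i)))"
    by (rule order_trans[OF norm_sum]) (simp add: norm_mult p0 mult.assoc[symmetric])
  then have "(cmod (\<Sum>i<m. of_real (p i) * t i))^2
      \<le> (\<Sum>i<m. sqrt (p i) * (sqrt (p i) * cmod (t i)))^2"
    by (simp add: power_mono)
  also have "\<dots> \<le> (\<Sum>i<m. (sqrt (p i))^2) * (\<Sum>i<m. (sqrt (p i) * cmod (t i))^2)"
    by (rule Cauchy_Schwarz_ineq_sum)
  also have "\<dots> = (\<Sum>i<m. p i * (cmod (t i))^2)"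
    using p1 p0 by (simp add: power_mult_distrib)
  finally show ?thesis .
qed

lemma concave_seq_diff_antimono:
  fixes h :: "nat \<Rightarrow> real"
  assumes concave: "\<And>i. 1 \<le> i \<Longrightarrow> h i + h (i + 2) \<le> 2 * h (i + 1)"
    and "1 \<le> i" "i \<le> j"
  shows "h (Suc j) - h j \<le> h (Suc i) - h i"
  using assms(3)
proof (induction j rule: dec_induct)
  case (step j)
  have "h (Suc (Suc j)) - h (Suc j) \<le> h (Suc j) - h j"
    using concave[of j] step.hyps(1) assms(2) by (simp add: numeral_2_eq_2)
  with step.IH show ?case by linarith
qed simp

lemma concave_seq_le_tangent:
  fixes h :: "nat \<Rightarrow> real"
  assumes concave: "\<And>i. 1 \<le> i \<Longrightarrow> h i + h (i + 2) \<le> 2 * h (i + 1)"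
    and "1 \<le> m" "1 \<le> q"
  shows "h m \<le> h q + (real m - real q) * (h (Suc q) - h q)"
proof (cases "q \<le> m")
  case True
  have "h m - h q = (\<Sum>i=q..<m. h (Suc i) - h i)"
    using True by (simp add: sum_Suc_diff')
  also have "\<dots> \<le> (\<Sum>i=q..<m. h (Suc q) - h q)"
    using assms(3) by (intro sum_mono concave_seq_diff_antimono[OF concave]) auto
  also have "\<dots> = (real m - real q) * (h (Suc q) - h q)"
    using True by (simp add: of_nat_diff)
  finally show ?thesis by simp
next
  case False
  have "(real q - real m) * (h (Suc q) - h q) = (\<Sum>i=m..<q. h (Suc q) - h q)"
    using False by (simp add: of_nat_diff)
  also have "\<dots> \<le> (\<Sum>i=m..<q. h (Suc i) - h i)"
    using assms(2) by (intro sum_mono concave_seq_diff_antimono[OF concave]) auto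
  also have "\<dots> = h q - h m"
    using False by (simp add: sum_Suc_diff')
  finally show ?thesis by (simp add: algebra_simps)
qed

lemma one_le_sum_div_card:
  fixes c :: "'a \<Rightarrow> nat"
  assumes "finite P" "P \<noteq> {}" "\<And>C. C \<in> P \<Longrightarrow> 1 \<le> c C"
  shows "1 \<le> sum c P div card P"
proof -
  have "card P \<le> sum c P"
    using sum_mono[of P "\<lambda>_. 1" c] assms(3) by simp
  moreover have "0 < card P" using assms(1,2) by (simp add: card_gt_0_iff)
  ultimately show ?thesis using div_le_mono[of "card P" "sum c P" "card P"] by simp
qed

lemma concave_seq_sum_le_balanced:
  fixes h :: "nat \<Rightarrow> real" and c :: "'a \<Rightarrow> nat"
  assumes concave: "\<And>i. 1 \<le> i \<Longrightarrow> h i + h (i + 2) \<le> 2 * h (i + 1)"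
    and P: "finite P" and c: "\<And>C. C \<in> P \<Longrightarrow> 1 \<le> c C"
  defines "k \<equiv> card P" and "n \<equiv> sum c P"
  shows "(\<Sum>C\<in>P. h (c C)) \<le> real (k - n mod k) * h (n div k) + real (n mod k) * h (Suc (n div k))"
proof -
  define q where "q = n div k"
  define \<delta> where "\<delta> = h (Suc q) - h q"
  have "(\<Sum>C\<in>P. h (c C)) \<le> (\<Sum>C\<in>P. (h q - real q * \<delta>) + \<delta> * real (c C))"
  proof (rule sum_mono)
    fix C assume "C \<in> P"
    then have "P \<noteq> {}" by blast
    with P have "1 \<le> q" unfolding q_def k_def n_def using c by (rule one_le_sum_div_card)
    with concave c[OF \<open>C \<in> P\<close>] have "h (c C) \<le> h q + (real (c C) - real q) * \<delta>"
      unfolding \<delta>_def by (rule concave_seq_le_tangent)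
    then show "h (c C) \<le> (h q - real q * \<delta>) + \<delta> * real (c C)"
      by (simp add: algebra_simps)
  qed
  also have "\<dots> = real k * (h q - real q * \<delta>) + \<delta> * real n"
    by (simp add: k_def n_def sum.distrib sum_distrib_left)
  also have "\<dots> = real (k - n mod k) * h q + real (n mod k) * h (Suc q)"
  proof -
    have "n mod k \<le> k"
    proof (cases "k = 0")
      case True
      then show ?thesis using P by (simp add: k_def n_def)
    qed (simp add: less_imp_le)
    moreover have "real n = real k * real q + real (n mod k)"
    proof -
      have "n = k * q + n mod k" by (simp add: q_def)
      then have "real n = real (k * q + n mod k)" by (rule arg_cong)
      then show ?thesis by (simp only: of_nat_add of_nat_mult)
    qed
    ultimately show ?thesis by (simp add: \<delta>_def of_nat_diff algebra_simps)
  qed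
  finally show ?thesis unfolding q_def .
qed

lemma ln_power_minus_one_concave:
  fixes x :: real
  assumes x: "1 < x" and i: "1 \<le> i"
  shows "ln (x ^ i - 1) + ln (x ^ (i + 2) - 1) \<le> 2 * ln (x ^ (i + 1) - 1)"
proof -
  have pos: "0 < x ^ m - 1" if "1 \<le> m" for m
    using x that by simp
  have p: "0 < x ^ i - 1" "0 < x ^ (i + 1) - 1" "0 < x ^ (i + 2) - 1"
    using pos[of i] pos[of "i + 1"] pos[of "i + 2"] i by simp_all
  have "(x ^ (i + 1) - 1)^2 - (x ^ i - 1) * (x ^ (i + 2) - 1) = x ^ i * (x - 1)^2"
    by (simp add: power_add power2_eq_square algebra_simps)
  moreover have "0 \<le> x ^ i * (x - 1)^2" using x by simp
  ultimately have "(x ^ i - 1) * (x ^ (i + 2) - 1) \<le> (x ^ (i + 1) - 1)^2" by linarith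
  then have "ln ((x ^ i - 1) * (x ^ (i + 2) - 1)) \<le> ln ((x ^ (i + 1) - 1)^2)"
    by (rule iffD2[OF ln_le_cancel_iff[OF mult_pos_pos[OF p(1,3)] zero_less_power[OF p(2)]]])
  then show ?thesis using p by (simp add: ln_mult ln_realpow)
qed

lemma prod_power_minus_one_le_balanced:
  fixes x :: real and c :: "'a \<Rightarrow> nat"
  assumes x: "1 < x" and P: "finite P" and c: "\<And>C. C \<in> P \<Longrightarrow> 1 \<le> c C"
  defines "k \<equiv> card P" and "n \<equiv> sum c P"
  shows "(\<Prod>C\<in>P. x ^ c C - 1) \<le> (x ^ Suc (n div k) - 1) ^ (n mod k) * (x ^ (n div k) - 1) ^ (k - n mod k)"
proof (cases "P = {}")
  case True
  then show ?thesis by (simp add: k_def n_def)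
next
  case False
  define h where "h i = ln (x ^ i - 1)" for i
  have exp_h: "exp (h i) = x ^ i - 1" if "1 \<le> i" for i
    using x that by (simp add: h_def)
  have q: "1 \<le> n div k"
    unfolding k_def n_def by (rule one_le_sum_div_card[OF P False c])
  have "(\<Prod>C\<in>P. x ^ c C - 1) = exp (\<Sum>C\<in>P. h (c C))"
    using P c by (simp add: exp_sum exp_h)
  also have "\<dots> \<le> exp (real (k - n mod k) * h (n div k) + real (n mod k) * h (Suc (n div k)))"
    using concave_seq_sum_le_balanced[of h, OF _ P c] ln_power_minus_one_concave[OF x]
    by (simp add: h_def k_def n_def)
  also have "\<dots> = (x ^ Suc (n div k) - 1) ^ (n mod k) * (x ^ (n div k) - 1) ^ (k - n mod k)"
    using q by (simp add: exp_add exp_of_nat_mult exp_h)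
  finally show ?thesis .
qed

lemma nat_ceiling_divide_eq_Suc_div:
  assumes "0 < k" "n mod k \<noteq> 0"
  shows "nat \<lceil>real n / real k\<rceil> = Suc (n div k)"
proof -
  have split: "real n / real k = real (n div k) + real (n mod k) / real k"
    by (rule of_nat_of_nat_div_aux)
  have "0 < real (n mod k) / real k" "real (n mod k) / real k < 1"
    using assms by simp_all
  then have "\<lceil>real n / real k\<rceil> = int (Suc (n div k))"
    unfolding split by (intro ceiling_unique) simp_all
  then show ?thesis by simp
qed

section \<open>Correlations of pure states\<close>

lemma finite_cfg: "finite S \<Longrightarrow> finite (cfg d S)"
  unfolding cfg_def by (simp add: finite_PiE)

lemma sum_cfg_prod:
  assumes "finite S"
  shows "(\<Sum>x\<in>cfg d S. \<Prod>j\<in>S. f j (x j)) = (\<Prod>j\<in>S. \<Sum>a<d. (f j a :: 'c::comm_semiring_1))"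
  unfolding cfg_def using prod_sum_PiE[OF assms, of "\<lambda>_. {..<d}" f] by simp

lemma sum_cfg_prod2:
  assumes "finite S"
  shows "(\<Sum>x\<in>cfg d S. \<Sum>y\<in>cfg d S. \<Prod>j\<in>S. f j (x j) (y j))
       = (\<Prod>j\<in>S. \<Sum>a<d. \<Sum>b<d. (f j a b :: 'c::comm_semiring_1))"
proof -
  have "(\<Sum>x\<in>cfg d S. \<Sum>y\<in>cfg d S. \<Prod>j\<in>S. f j (x j) (y j))
      = (\<Sum>x\<in>cfg d S. \<Prod>j\<in>S. \<Sum>b<d. f j (x j) b)"
    by (intro sum.cong refl) (rule sum_cfg_prod[OF assms])
  also have "\<dots> = (\<Prod>j\<in>S. \<Sum>a<d. \<Sum>b<d. f j a b)"
    by (rule sum_cfg_prod[OF assms])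
  finally show ?thesis .
qed

definition gm_full :: "(nat \<Rightarrow> op1) \<Rightarrow> nat \<Rightarrow> op1" where
  "gm_full lam i a b = (if i = 0 then (if a = b then 1 else 0) else lam i a b)"

lemma gm_basisD:
  assumes "gm_basis d lam" "i \<in> {1..d^2-1}"
  shows "\<And>a b. a < d \<Longrightarrow> b < d \<Longrightarrow> lam i a b = cnj (lam i b a)"
    and "(\<Sum>a<d. lam i a a) = 0"
    and "\<And>j. j \<in> {1..d^2-1} \<Longrightarrow> (\<Sum>a<d. \<Sum>b<d. lam i a b * lam j b a) = (if i = j then of_nat d else 0)"
  using assms unfolding gm_basis_def by blast+

lemma gm_full_hermitian:
  assumes gm: "gm_basis d lam" and i: "i \<le> d^2 - 1" and "a < d" "b < d"
  shows "cnj (gm_full lam i a b) = gm_full lam i b a"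
proof (cases "i = 0")
  case False
  with i have "i \<in> {1..d^2-1}" by simp
  from gm_basisD(1)[OF gm this \<open>b < d\<close> \<open>a < d\<close>] False show ?thesis
    by (simp add: gm_full_def)
qed (simp add: gm_full_def)

lemma gm_full_trace:
  assumes gm: "gm_basis d lam" and i: "i \<le> d^2 - 1"
  shows "(\<Sum>a<d. gm_full lam i a a) = (if i = 0 then of_nat d else 0)"
proof (cases "i = 0")
  case False
  with i have "i \<in> {1..d^2-1}" by simp
  from gm_basisD(2)[OF gm this] False show ?thesis by (simp add: gm_full_def)
qed (simp add: gm_full_def)

lemma gm_full_orthogonal:
  assumes gm: "gm_basis d lam" and i: "i \<le> d^2 - 1" and i': "i' \<le> d^2 - 1"
  shows "(\<Sum>a<d. \<Sum>b<d. gm_full lam i a b * gm_full lam i' b a) = (if i = i' then of_nat d else 0)"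
proof -
  have id_left: "(\<Sum>a<d. \<Sum>b<d. gm_full lam 0 a b * M b a) = (\<Sum>a<d. M a a)" for M :: op1
    by (intro sum.cong refl) (simp add: gm_full_def if_distrib[of "\<lambda>z. z * _"] cong: if_cong)
  have id_right: "(\<Sum>a<d. \<Sum>b<d. M a b * gm_full lam 0 b a) = (\<Sum>a<d. M a a)" for M :: op1
    by (intro sum.cong refl) (simp add: gm_full_def if_distrib[of "\<lambda>z. _ * z"] cong: if_cong)
  consider "i = 0" | "i' = 0" | "i \<noteq> 0" "i' \<noteq> 0" by blast
  then show ?thesis
  proof cases
    case 1
    then show ?thesis using id_left gm_full_trace[OF gm i'] by simp
  next
    case 2
    then show ?thesis using id_right gm_full_trace[OF gm i] by auto
  next
    case 3
    with i i' have "i \<in> {1..d^2-1}" "i' \<in> {1..d^2-1}" by simp_all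
    from gm_basisD(3)[OF gm this] 3 show ?thesis by (simp add: gm_full_def)
  qed
qed

lemma gm_full_tensor_orthogonal:
  assumes gm: "gm_basis d lam" and S: "finite S"
    and e: "e \<in> S \<rightarrow>\<^sub>E {0..d^2-1}" and f: "f \<in> S \<rightarrow>\<^sub>E {0..d^2-1}"
  shows "(\<Sum>x\<in>cfg d S. \<Sum>y\<in>cfg d S.
            (\<Prod>j\<in>S. gm_full lam (e j) (y j) (x j)) * (\<Prod>j\<in>S. gm_full lam (f j) (x j) (y j)))
       = (if e = f then of_nat d ^ card S else 0)"
proof -
  have "(\<Sum>x\<in>cfg d S. \<Sum>y\<in>cfg d S.
            (\<Prod>j\<in>S. gm_full lam (e j) (y j) (x j)) * (\<Prod>j\<in>S. gm_full lam (f j) (x j) (y j)))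
      = (\<Prod>j\<in>S. \<Sum>a<d. \<Sum>b<d. gm_full lam (e j) b a * gm_full lam (f j) a b)"
    using sum_cfg_prod2[OF S, where f = "\<lambda>j a b. gm_full lam (e j) b a * gm_full lam (f j) a b"]
    by (simp add: prod.distrib)
  also have "\<dots> = (\<Prod>j\<in>S. if e j = f j then of_nat d else 0)"
  proof (intro prod.cong refl)
    fix j assume "j \<in> S"
    then have "e j \<le> d^2 - 1" "f j \<le> d^2 - 1" using e f by auto
    then show "(\<Sum>a<d. \<Sum>b<d. gm_full lam (e j) b a * gm_full lam (f j) a b)
        = (if e j = f j then of_nat d else 0)"
      by (subst sum.swap) (rule gm_full_orthogonal[OF gm])
  qed
  also have "\<dots> = (if e = f then of_nat d ^ card S else 0)"
    by (rule prod_if_eq_PiE[OF S e f])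
  finally show ?thesis .
qed

definition expval :: "nat \<Rightarrow> (nat \<Rightarrow> op1) \<Rightarrow> nat set \<Rightarrow> ((nat \<Rightarrow> nat) \<Rightarrow> complex)
    \<Rightarrow> (nat \<Rightarrow> nat) \<Rightarrow> complex" where
  "expval d lam S \<psi> e =
     (\<Sum>x\<in>cfg d S. \<Sum>y\<in>cfg d S. \<psi> x * cnj (\<psi> y) * (\<Prod>j\<in>S. gm_full lam (e j) (y j) (x j)))"

definition corr_sq :: "nat \<Rightarrow> (nat \<Rightarrow> op1) \<Rightarrow> nat set \<Rightarrow> ((nat \<Rightarrow> nat) \<Rightarrow> complex) \<Rightarrow> real" where
  "corr_sq d lam S \<psi> = (\<Sum>e\<in>S \<rightarrow>\<^sub>E {1..d^2-1}. (cmod (expval d lam S \<psi> e))^2)"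

lemma expval_id:
  assumes "finite S"
  shows "expval d lam S \<psi> (\<lambda>j\<in>S. 0) = of_real (\<Sum>x\<in>cfg d S. (cmod (\<psi> x))^2)"
proof -
  have delta: "(\<Prod>j\<in>S. gm_full lam 0 (y j) (x j)) = (if y = x then 1 else 0)"
    if "x \<in> cfg d S" "y \<in> cfg d S" for x y
  proof (cases "y = x")
    case False
    moreover have "y \<in> S \<rightarrow>\<^sub>E {..<d}" "x \<in> S \<rightarrow>\<^sub>E {..<d}" using that by (simp_all add: cfg_def)
    ultimately obtain j where "j \<in> S" "y j \<noteq> x j" by (metis PiE_neqE)
    then show ?thesis using False assms by (intro trans[OF prod_zero]) (auto simp: gm_full_def)
  next
    case True
    show ?thesis using True by (simp add: gm_full_def)
  qed
  have "expval d lam S \<psi> (\<lambda>j\<in>S. 0)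
      = (\<Sum>x\<in>cfg d S. \<Sum>y\<in>cfg d S. if y = x then \<psi> x * cnj (\<psi> y) else 0)"
    unfolding expval_def by (intro sum.cong refl) (simp add: delta)
  also have "\<dots> = (\<Sum>x\<in>cfg d S. \<psi> x * cnj (\<psi> x))"
    using finite_cfg[OF assms] by simp
  finally show ?thesis by (simp add: complex_mult_cnj cmod_def)
qed

lemma sum_expval_sq_le:
  assumes gm: "gm_basis d lam" and S: "finite S"
  shows "(\<Sum>e\<in>S \<rightarrow>\<^sub>E {0..d^2-1}. (cmod (expval d lam S \<psi> e))^2)
       \<le> real d ^ card S * (\<Sum>x\<in>cfg d S. (cmod (\<psi> x))^2)^2"
proof -
  let ?X = "cfg d S \<times> cfg d S"
  let ?E = "S \<rightarrow>\<^sub>E {0..d^2-1}"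
  define u where "u e z = (\<Prod>j\<in>S. gm_full lam (e j) (fst z j) (snd z j))" for e z
  define v where "v z = \<psi> (fst z) * cnj (\<psi> (snd z))" for z
  have cnj_u: "cnj (u e (x, y)) = (\<Prod>j\<in>S. gm_full lam (e j) (y j) (x j))"
    if "e \<in> ?E" "x \<in> cfg d S" "y \<in> cfg d S" for e x y
    unfolding u_def cnj_prod fst_conv snd_conv using that
    by (intro prod.cong refl gm_full_hermitian[OF gm]) (auto simp: cfg_def)
  have expval: "expval d lam S \<psi> e = (\<Sum>z\<in>?X. cnj (u e z) * v z)" if "e \<in> ?E" for e
    unfolding expval_def sum.cartesian_product'
    by (intro sum.cong refl) (simp add: cnj_u[OF that] v_def mult_ac)
  have orth: "(\<Sum>z\<in>?X. cnj (u e z) * u f z) = (if e = f then of_real (real d ^ card S) else 0)"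
    if "e \<in> ?E" "f \<in> ?E" for e f
  proof -
    have "(\<Sum>z\<in>?X. cnj (u e z) * u f z) = (\<Sum>x\<in>cfg d S. \<Sum>y\<in>cfg d S.
        (\<Prod>j\<in>S. gm_full lam (e j) (y j) (x j)) * (\<Prod>j\<in>S. gm_full lam (f j) (x j) (y j)))"
      unfolding sum.cartesian_product'
      by (intro sum.cong refl) (simp add: cnj_u[OF that(1)] u_def[of f])
    then show ?thesis by (simp add: gm_full_tensor_orthogonal[OF gm S that])
  qed
  have norm_v: "(\<Sum>z\<in>?X. (cmod (v z))^2) = (\<Sum>x\<in>cfg d S. (cmod (\<psi> x))^2)^2"
    unfolding sum.cartesian_product' v_def
    by (simp add: norm_mult power_mult_distrib power2_eq_square sum_product mult_ac)
  have "(\<Sum>e\<in>?E. (cmod (expval d lam S \<psi> e))^2) = (\<Sum>e\<in>?E. (cmod (\<Sum>z\<in>?X. cnj (u e z) * v z))^2)"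
    by (intro sum.cong refl) (simp add: expval)
  also have "\<dots> \<le> real d ^ card S * (\<Sum>z\<in>?X. (cmod (v z))^2)"
    using S by (intro bessel_inequality orth) (simp_all add: finite_cfg finite_PiE)
  finally show ?thesis unfolding norm_v .
qed

lemma corr_sq_unit_vec_le:
  assumes gm: "gm_basis d lam" and S: "finite S" "S \<noteq> {}" and \<psi>: "unit_vec d S \<psi>"
  shows "corr_sq d lam S \<psi> \<le> real d ^ card S - 1"
proof -
  let ?E = "S \<rightarrow>\<^sub>E {0..d^2-1}" and ?F = "S \<rightarrow>\<^sub>E {1..d^2-1}"
  let ?e0 = "\<lambda>j\<in>S. 0"
  have "?e0 \<notin> ?F" using S(2) by auto
  moreover have "finite ?F" using S(1) by (simp add: finite_PiE)
  ultimately have "(cmod (expval d lam S \<psi> ?e0))^2 + corr_sq d lam S \<psi>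
      = (\<Sum>e\<in>insert ?e0 ?F. (cmod (expval d lam S \<psi> e))^2)"
    unfolding corr_sq_def by simp
  also have "\<dots> \<le> (\<Sum>e\<in>?E. (cmod (expval d lam S \<psi> e))^2)"
    using S(1) by (intro sum_mono2) (auto simp: finite_PiE PiE_iff)
  also have "\<dots> \<le> real d ^ card S"
    using sum_expval_sq_le[OF gm S(1), of \<psi>] \<psi> by (simp add: unit_vec_def)
  moreover have "expval d lam S \<psi> ?e0 = 1"
    using \<psi> by (simp add: expval_id[OF S(1)] unit_vec_def)
  ultimately show ?thesis by simp
qed

lemma expval_product:
  assumes P: "finite P" "\<And>C. C \<in> P \<Longrightarrow> finite C" "disjoint P"
    and \<psi>: "\<And>x. x \<in> cfg d (\<Union>P) \<Longrightarrow> \<psi> x = (\<Prod>C\<in>P. \<phi> C (restrict x C))"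
  shows "expval d lam (\<Union>P) \<psi> e = (\<Prod>C\<in>P. expval d lam C (\<phi> C) (restrict e C))"
proof -
  define G where "G C a b = \<phi> C a * cnj (\<phi> C b) * (\<Prod>j\<in>C. gm_full lam (e j) (b j) (a j))"
    for C and a b :: "nat \<Rightarrow> nat"
  have factor: "\<psi> x * cnj (\<psi> y) * (\<Prod>j\<in>\<Union>P. gm_full lam (e j) (y j) (x j))
      = (\<Prod>C\<in>P. G C (restrict x C) (restrict y C))"
    if "x \<in> cfg d (\<Union>P)" "y \<in> cfg d (\<Union>P)" for x y
  proof -
    have "(\<Prod>j\<in>\<Union>P. gm_full lam (e j) (y j) (x j))
        = (\<Prod>C\<in>P. \<Prod>j\<in>C. gm_full lam (e j) (restrict y C j) (restrict x C j))"
      using P by (simp add: prod.Union_disjoint_sets)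
    then show ?thesis
      using \<psi>[OF that(1)] \<psi>[OF that(2)] by (simp add: G_def cnj_prod prod.distrib mult_ac)
  qed
  have "expval d lam (\<Union>P) \<psi> e
      = (\<Sum>x\<in>cfg d (\<Union>P). \<Sum>y\<in>cfg d (\<Union>P). \<Prod>C\<in>P. G C (restrict x C) (restrict y C))"
    unfolding expval_def by (intro sum.cong refl) (simp add: factor)
  also have "\<dots> = (\<Sum>x\<in>cfg d (\<Union>P). \<Prod>C\<in>P. \<Sum>b\<in>cfg d C. G C (restrict x C) b)"
    unfolding cfg_def
    by (intro sum.cong refl sum_PiE_Union_prod_restrict[OF P, of "{..<d}" "\<lambda>C. G C (restrict _ C)"]) simp_all
  also have "\<dots> = (\<Prod>C\<in>P. \<Sum>a\<in>cfg d C. \<Sum>b\<in>cfg d C. G C a b)"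
    unfolding cfg_def by (rule sum_PiE_Union_prod_restrict[OF P]) simp_all
  also have "\<dots> = (\<Prod>C\<in>P. expval d lam C (\<phi> C) (restrict e C))"
    unfolding expval_def G_def by simp
  finally show ?thesis .
qed

lemma corr_sq_product:
  assumes P: "finite P" "\<And>C. C \<in> P \<Longrightarrow> finite C" "disjoint P"
    and \<psi>: "\<And>x. x \<in> cfg d (\<Union>P) \<Longrightarrow> \<psi> x = (\<Prod>C\<in>P. \<phi> C (restrict x C))"
  shows "corr_sq d lam (\<Union>P) \<psi> = (\<Prod>C\<in>P. corr_sq d lam C (\<phi> C))"
proof -
  note expval_product[where P = P and \<psi> = \<psi> and \<phi> = \<phi> and d = d and lam = lam, OF P \<psi>]
  then have "corr_sq d lam (\<Union>P) \<psi>
      = (\<Sum>e\<in>\<Union>P \<rightarrow>\<^sub>E {1..d^2-1}. \<Prod>C\<in>P. (cmod (expval d lam C (\<phi> C) (restrict e C)))^2)"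
    unfolding corr_sq_def by (simp add: prod_norm[symmetric] prod_power_distrib)
  also have "\<dots> = (\<Prod>C\<in>P. corr_sq d lam C (\<phi> C))"
    unfolding corr_sq_def
    by (rule sum_PiE_Union_prod_restrict[OF P, where f = "\<lambda>C a. (cmod (expval d lam C (\<phi> C) a))^2"]) simp_all
  finally show ?thesis .
qed

section \<open>k-separable states\<close>

lemma corr_sq_ksep_pure_le:
  assumes gm: "gm_basis d lam" and d: "2 \<le> d" and \<psi>: "ksep_pure d n k \<psi>"
  shows "corr_sq d lam {..<n} \<psi>
    \<le> (real d ^ Suc (n div k) - 1) ^ (n mod k) * (real d ^ (n div k) - 1) ^ (k - n mod k)"
proof -
  obtain P \<phi> where P: "partition_on {..<n} P" and k: "card P = k"
    and \<phi>: "\<And>B. B \<in> P \<Longrightarrow> unit_vec d B (\<phi> B)"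
    and \<psi>_eq: "\<And>x. x \<in> cfg d {..<n} \<Longrightarrow> \<psi> x = (\<Prod>B\<in>P. \<phi> B (restrict x B))"
    using \<psi> unfolding ksep_pure_def by blast
  have U: "\<Union>P = {..<n}" using partition_onD1[OF P] by simp
  have fin: "finite P" using finite_elements[OF _ P] by simp
  have finB: "\<And>B. B \<in> P \<Longrightarrow> finite B" using U by (metis Union_upper finite_lessThan finite_subset)
  have ne: "\<And>B. B \<in> P \<Longrightarrow> 1 \<le> card B"
    using partition_onD3[OF P] finB by (metis One_nat_def Suc_leI card_gt_0_iff)
  have n: "(\<Sum>B\<in>P. card B) = n" using product_partition[OF P finB] by simp
  have "corr_sq d lam (\<Union>P) \<psi> = (\<Prod>B\<in>P. corr_sq d lam B (\<phi> B))"
    using fin finB partition_onD2[OF P] \<psi>_eq[unfolded U[symmetric]] by (rule corr_sq_product)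
  then have "corr_sq d lam {..<n} \<psi> = (\<Prod>B\<in>P. corr_sq d lam B (\<phi> B))"
    by (simp only: U)
  also have "\<dots> \<le> (\<Prod>B\<in>P. real d ^ card B - 1)"
  proof (rule prod_mono)
    fix B assume B: "B \<in> P"
    then have "B \<noteq> {}" using ne by fastforce
    then show "0 \<le> corr_sq d lam B (\<phi> B) \<and> corr_sq d lam B (\<phi> B) \<le> real d ^ card B - 1"
      using corr_sq_unit_vec_le[OF gm finB[OF B] _ \<phi>[OF B]] by (simp add: corr_sq_def sum_nonneg)
  qed
  also have "\<dots> \<le> (real d ^ Suc (n div k) - 1) ^ (n mod k) * (real d ^ (n div k) - 1) ^ (k - n mod k)"
    using prod_power_minus_one_le_balanced[of "real d" P card] d fin ne by (simp add: n k)
  finally show ?thesis .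
qed

lemma trace_prod_mixture:
  fixes p :: "nat \<Rightarrow> real"
  assumes \<rho>: "\<And>x y. x \<in> cfg d {..<n} \<Longrightarrow> y \<in> cfg d {..<n} \<Longrightarrow>
      \<rho> x y = (\<Sum>i<m. of_real (p i) * \<psi> i x * cnj (\<psi> i y))"
    and e: "e \<in> {..<n} \<rightarrow>\<^sub>E {1..d^2-1}"
  shows "trace_prod d n \<rho> (tensor_ops n (\<lambda>j. lam (e j)))
    = (\<Sum>i<m. of_real (p i) * expval d lam {..<n} (\<psi> i) e)"
proof -
  have lam: "(\<Prod>j<n. lam (e j) (y j) (x j)) = (\<Prod>j<n. gm_full lam (e j) (y j) (x j))" for x y
  proof (intro prod.cong refl)
    fix j assume "j \<in> {..<n}"
    then have "e j \<noteq> 0" using PiE_mem[OF e] by fastforce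
    then show "lam (e j) (y j) (x j) = gm_full lam (e j) (y j) (x j)" by (simp add: gm_full_def)
  qed
  have "trace_prod d n \<rho> (tensor_ops n (\<lambda>j. lam (e j)))
    = (\<Sum>x\<in>cfg d {..<n}. \<Sum>y\<in>cfg d {..<n}. \<Sum>i<m.
        of_real (p i) * (\<psi> i x * cnj (\<psi> i y) * (\<Prod>j<n. gm_full lam (e j) (y j) (x j))))"
    unfolding trace_prod_def tensor_ops_def lam
    by (intro sum.cong refl) (simp add: \<rho> sum_distrib_right mult.assoc)
  also have "\<dots> = (\<Sum>i<m. of_real (p i) * expval d lam {..<n} (\<psi> i) e)"
    unfolding expval_def sum_distrib_left
    by (subst sum.swap) (intro sum.cong refl, rule sum.swap)
  finally show ?thesis .
qed

lemma tau_norm_mixture_le: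
  fixes p :: "nat \<Rightarrow> real"
  assumes p: "\<And>i. i < m \<Longrightarrow> 0 \<le> p i" "(\<Sum>i<m. p i) = 1"
    and \<rho>: "\<And>x y. x \<in> cfg d {..<n} \<Longrightarrow> y \<in> cfg d {..<n} \<Longrightarrow>
      \<rho> x y = (\<Sum>i<m. of_real (p i) * \<psi> i x * cnj (\<psi> i y))"
    and bound: "\<And>i. i < m \<Longrightarrow> corr_sq d lam {..<n} (\<psi> i) \<le> B"
  shows "tau_norm d n lam \<rho> \<le> sqrt B"
proof -
  let ?E = "{..<n} \<rightarrow>\<^sub>E {1..d^2-1}"
  have tp: "trace_prod d n \<rho> (tensor_ops n (\<lambda>j. lam (e j)))
      = (\<Sum>i<m. of_real (p i) * expval d lam {..<n} (\<psi> i) e)" if "e \<in> ?E" for e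
    using \<rho> that by (rule trace_prod_mixture)
  have "(\<Sum>e\<in>?E. (cmod (trace_prod d n \<rho> (tensor_ops n (\<lambda>j. lam (e j)))))^2)
      = (\<Sum>e\<in>?E. (cmod (\<Sum>i<m. of_real (p i) * expval d lam {..<n} (\<psi> i) e))^2)"
  proof (rule sum.cong[OF refl])
    fix e assume "e \<in> ?E"
    show "(cmod (trace_prod d n \<rho> (tensor_ops n (\<lambda>j. lam (e j)))))^2
        = (cmod (\<Sum>i<m. of_real (p i) * expval d lam {..<n} (\<psi> i) e))^2"
      by (simp only: tp[OF \<open>e \<in> ?E\<close>])
  qed
  also have "\<dots> \<le> (\<Sum>e\<in>?E. \<Sum>i<m. p i * (cmod (expval d lam {..<n} (\<psi> i) e))^2)"
    by (intro sum_mono cmod_convex_comb_sq_le p)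
  also have "\<dots> = (\<Sum>i<m. p i * corr_sq d lam {..<n} (\<psi> i))"
    unfolding corr_sq_def by (subst sum.swap) (simp add: sum_distrib_left)
  also have "\<dots> \<le> (\<Sum>i<m. p i * B)"
    by (intro sum_mono mult_left_mono bound p) auto
  also have "\<dots> = B" using p(2) by (simp flip: sum_distrib_right)
  finally show ?thesis unfolding tau_norm_def by (rule real_sqrt_le_mono)
qed

theorem mainTheorem6:
  fixes n d k :: nat and lam :: "nat \<Rightarrow> op1" and \<rho> :: opn
  assumes "n \<ge> 1" and "d \<ge> 2" and "1 \<le> k" and "k \<le> n"
    and "gm_basis d lam"
    and "ksep_state d n k \<rho>"
  shows "tau_norm d n lam \<rho> \<le>
    sqrt ((real d ^ nat \<lceil>real n / real k\<rceil> - 1) ^ (n - k * (n div k))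
        * (real d ^ (n div k) - 1) ^ (k - (n - k * (n div k))))"
proof -
  obtain m and p :: "nat \<Rightarrow> real" and \<psi> where
    p: "\<And>i. i < m \<Longrightarrow> 0 \<le> p i" "(\<Sum>i<m. p i) = 1"
    and pure: "\<And>i. i < m \<Longrightarrow> ksep_pure d n k (\<psi> i)"
    and \<rho>: "\<And>x y. x \<in> cfg d {..<n} \<Longrightarrow> y \<in> cfg d {..<n} \<Longrightarrow>
      \<rho> x y = (\<Sum>i<m. of_real (p i) * \<psi> i x * cnj (\<psi> i y))"
    using assms(6) unfolding ksep_state_def by blast
  have R: "n - k * (n div k) = n mod k" by (simp add: minus_mult_div_eq_mod)
  have ceil: "(real d ^ nat \<lceil>real n / real k\<rceil> - 1) ^ (n mod k) = (real d ^ Suc (n div k) - 1) ^ (n mod k)"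
    using assms(3) by (cases "n mod k = 0") (simp_all add: nat_ceiling_divide_eq_Suc_div)
  show ?thesis
    unfolding R ceil using p \<rho> corr_sq_ksep_pure_le[OF assms(5,2) pure] by (rule tau_norm_mixture_le)
qed

end
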